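(* Let $X$ be a non-empty set, $A$ a non-empty subset of $X$, and $\alpha$ an equivalence relation on $X$ with equivalence classes $\{A_i:i\in I\}$. Then (i) $|E(\mathcal T_X(A))|=1$ if $|A|=1$; $=2^{|X|}$ if $X$ is infinite and $|A|\ge2$; and $=\sum_{\mu=1}^{|A|}\mu^{|X|-\mu}\binom{|A|}{\mu}$ otherwise; (ii) $|E(\mathcal T_X(\alpha))|=2^{\|\alpha\|}\prod_{i\in I}|A_i|$ if $X$ is infinite, and $=\sum_{\mu=1}^{\|\alpha\|}\mu^{\|\alpha\|-\mu}\sum_{J\subseteq I,\,|J|=\mu}\prod_{j\in J}|A_j|$ if $X$ is finite.
   Context: $\mathcal T_X(A)=\{f:X\to X\mid\operatorname{im}(f)\subseteq A\}$ and $\mathcal T_X(\alpha)=\{f:X\to X\mid\ker(f)\supseteq\alpha\}$, with $\ker(f)=\{(x,y):xf=yf\}$. $E(T)$ is the set of idempotents of $T$; $\|\alpha\|=|I|$ is the number of $\alpha$-classes; $\binom{n}{k}$ is the binomial coefficient. Cardinal arithmetic in infinite cases. *)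

theory Defs
  imports Main "HOL-Library.FuncSet" "HOL-Library.Equipollence"
begin

text \<open>Full transformations of X are represented as extensional functions in PiE X (\<lambda>_. X).\<close>

definition T_im :: "'a set \<Rightarrow> 'a set \<Rightarrow> ('a \<Rightarrow> 'a) set" where
  "T_im X A = {f \<in> X \<rightarrow>\<^sub>E X. f ` X \<subseteq> A}"

definition T_ker :: "'a set \<Rightarrow> ('a \<times> 'a) set \<Rightarrow> ('a \<Rightarrow> 'a) set" where
  "T_ker X \<alpha> = {f \<in> X \<rightarrow>\<^sub>E X. \<alpha> \<subseteq> {(x, y). x \<in> X \<and> y \<in> X \<and> f x = f y}}"

definition Idem :: "'a set \<Rightarrow> ('a \<Rightarrow> 'a) set \<Rightarrow> ('a \<Rightarrow> 'a) set" where
  "Idem X S = {f \<in> S. \<forall>x \<in> X. f (f x) = f x}"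

end

theory Submission
  imports Defs
begin

text \<open>An idempotent is the identity on its image \<open>B\<close> and is otherwise an arbitrary map of
  \<open>X - B\<close> into \<open>B\<close>; grouping the idempotents of \<open>T_X(A)\<close> by their image \<open>B \<subseteq> A\<close> gives the
  finite count. An idempotent with \<open>\<alpha> \<subseteq> ker f\<close> is determined by its values on the classes;
  grouping by the set \<open>J\<close> of classes that contain a value, the values form a choice function on
  \<open>J\<close> together with an arbitrary map from the remaining classes into \<open>J\<close>.

  For infinite \<open>X\<close>, the retractions onto two fixed points (resp. onto representatives of two
  fixed classes) already give \<open>2^|X|\<close> (resp. \<open>2^\<parallel>\<alpha>\<parallel>\<close>) idempotents, while an idempotent
  is determined by its graph (resp. by its map of classes together with a choice function).
  When there are only finitely many classes, one of them is infinite, and the infinite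
  product of the classes absorbs all finite factors.\<close>

lemma eqpoll_Pow: "A \<approx> B \<Longrightarrow> Pow A \<approx> Pow B"
  unfolding eqpoll_def using bij_betw_Pow by blast

lemma times_self_eqpoll: "infinite A \<Longrightarrow> A \<times> A \<approx> A"
  using card_of_Times_same_infinite eqpoll_iff_card_of_ordIso by blast

lemma times_infinite_eqpoll:
  assumes "infinite A" "B \<noteq> {}" "B \<lesssim> A"
  shows "B \<times> A \<approx> A"
  using card_of_Times_infinite[OF assms(1,2)] assms(3)
  by (simp add: eqpoll_iff_card_of_ordIso lepoll_def card_of_ordLeq[symmetric])

lemma times_lepoll_infinite:
  assumes "infinite C" "A \<lesssim> C" "B \<lesssim> C"
  shows "A \<times> B \<lesssim> C"
proof -
  have "A \<times> B \<lesssim> C \<times> C" using assms times_lepoll_mono by blast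
  then show ?thesis using times_self_eqpoll[OF assms(1)] lepoll_trans2 by blast
qed

lemma infinite_Diff_finite_eqpoll:
  assumes "infinite X" "finite F"
  shows "X - F \<approx> X"
  using assms(2)
proof (induction F)
  case (insert a F)
  have "infinite (X - insert a F)" using assms(1) insert.hyps(1) by auto
  then have "insert a (X - insert a F) \<approx> X - insert a F" by (rule infinite_insert_eqpoll)
  moreover have "X - F \<lesssim> insert a (X - insert a F)" by (rule subset_imp_lepoll) auto
  ultimately have "X - F \<lesssim> X - insert a F" using lepoll_trans2 by blast
  moreover have "X - insert a F \<lesssim> X - F" by (rule subset_imp_lepoll) auto
  ultimately have "X - insert a F \<approx> X - F" by (simp add: lepoll_antisym)
  then show ?case using insert.IH eqpoll_trans by blast
qed simp

lemma funcset_lepoll_Pow: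
  assumes "infinite X"
  shows "X \<rightarrow>\<^sub>E X \<lesssim> Pow X"
proof -
  let ?graph = "\<lambda>f. (\<lambda>x. (x, f x)) ` X"
  have "inj_on ?graph (X \<rightarrow>\<^sub>E X)"
  proof (rule inj_onI)
    fix f g assume "f \<in> X \<rightarrow>\<^sub>E X" "g \<in> X \<rightarrow>\<^sub>E X" "?graph f = ?graph g"
    then show "f = g" by (intro PiE_ext) auto
  qed
  then have "X \<rightarrow>\<^sub>E X \<lesssim> Pow (X \<times> X)" unfolding lepoll_def by blast
  also have "Pow (X \<times> X) \<approx> Pow X" by (rule eqpoll_Pow[OF times_self_eqpoll[OF assms]])
  finally show ?thesis .
qed

lemma Pow_lepoll_two_valued_retractions:
  assumes "infinite S" "a \<in> S" "b \<in> S" "a \<noteq> b"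
  shows "Pow S \<lesssim> {f \<in> S \<rightarrow>\<^sub>E {a, b}. f a = a \<and> f b = b}"
proof -
  let ?F = "\<lambda>T. \<lambda>x\<in>S. if x = a \<or> x \<noteq> b \<and> x \<in> T then a else b"
  have "Pow S \<approx> Pow (S - {a, b})"
    by (rule eqpoll_Pow[OF eqpoll_sym[OF infinite_Diff_finite_eqpoll[OF assms(1)]]]) simp
  also have "Pow (S - {a, b}) \<lesssim> {f \<in> S \<rightarrow>\<^sub>E {a, b}. f a = a \<and> f b = b}"
    unfolding lepoll_def
  proof (intro exI conjI)
    show "inj_on ?F (Pow (S - {a, b}))"
    proof (rule inj_onI)
      fix T U assume "T \<in> Pow (S - {a, b})" "U \<in> Pow (S - {a, b})" "?F T = ?F U"
      then show "T = U" using assms(4) by (auto simp: fun_eq_iff split: if_splits)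
    qed
  qed (use assms in auto)
  finally show ?thesis .
qed

lemma sum_Pow_by_card:
  assumes "finite A"
  shows "(\<Sum>B\<in>Pow A. h B) = (\<Sum>k = 0..card A. \<Sum>B | B \<subseteq> A \<and> card B = k. h B)"
proof -
  have "card ` Pow A \<subseteq> {0..card A}" using assms by (auto intro: card_mono)
  then show ?thesis using sum.group[of "Pow A" "{0..card A}" card h] assms by simp
qed

lemma card_eq_sum_fibres_over_Pow:
  fixes c :: "nat \<Rightarrow> nat" and w :: "'a set \<Rightarrow> nat"
  assumes "finite S" "finite A" "\<And>x. x \<in> S \<Longrightarrow> \<phi> x \<subseteq> A"
    and "\<And>B. B \<subseteq> A \<Longrightarrow> card {x \<in> S. \<phi> x = B} = c (card B) * w B"
  shows "card S = (\<Sum>k = 0..card A. c k * (\<Sum>B | B \<subseteq> A \<and> card B = k. w B))"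
proof -
  have "\<phi> ` S \<subseteq> Pow A" using assms(3) by blast
  then have "card S = (\<Sum>B\<in>Pow A. card {x \<in> S. \<phi> x = B})"
    using sum.group[of S "Pow A" \<phi> "\<lambda>_. 1::nat"] assms(1,2) by simp
  also have "\<dots> = (\<Sum>B\<in>Pow A. c (card B) * w B)" using assms(4) by simp
  also have "\<dots> = (\<Sum>k = 0..card A. \<Sum>B | B \<subseteq> A \<and> card B = k. c (card B) * w B)"
    by (rule sum_Pow_by_card[OF assms(2)])
  also have "\<dots> = (\<Sum>k = 0..card A. \<Sum>B | B \<subseteq> A \<and> card B = k. c k * w B)"
    by (intro sum.cong) auto
  finally show ?thesis by (simp add: sum_distrib_left)
qed

lemma Idem_T_im_iff:
  "f \<in> Idem X (T_im X A) \<longleftrightarrow> f \<in> X \<rightarrow>\<^sub>E X \<and> f ` X \<subseteq> A \<and> (\<forall>x\<in>X. f (f x) = f x)"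
  by (auto simp: Idem_def T_im_def)

lemma Idem_T_im_singleton:
  assumes "a \<in> X"
  shows "Idem X (T_im X {a}) = {\<lambda>x\<in>X. a}"
proof
  have "(\<lambda>x\<in>X. a) \<in> Idem X (T_im X {a})"
    unfolding Idem_T_im_iff using assms by auto
  then show "{\<lambda>x\<in>X. a} \<subseteq> Idem X (T_im X {a})" by simp
  show "Idem X (T_im X {a}) \<subseteq> {\<lambda>x\<in>X. a}"
  proof
    fix f assume "f \<in> Idem X (T_im X {a})"
    then have "f \<in> X \<rightarrow>\<^sub>E X" "f ` X \<subseteq> {a}" by (simp_all add: Idem_T_im_iff)
    moreover have "(\<lambda>x\<in>X. a) \<in> X \<rightarrow>\<^sub>E X" using assms by simp
    ultimately have "f = (\<lambda>x\<in>X. a)" by (intro PiE_ext) auto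
    then show "f \<in> {\<lambda>x\<in>X. a}" by simp
  qed
qed

lemma identity_extension_in_Idem_T_im:
  assumes "B \<subseteq> A" "A \<subseteq> X" "g \<in> X - B \<rightarrow>\<^sub>E B"
  shows "(\<lambda>x\<in>X. if x \<in> B then x else g x) \<in> Idem X (T_im X A)"
    and "(\<lambda>x\<in>X. if x \<in> B then x else g x) ` X = B"
proof -
  let ?f = "\<lambda>x\<in>X. if x \<in> B then x else g x"
  have gB: "g x \<in> B" if "x \<in> X" "x \<notin> B" for x
    using assms(3) that by auto
  moreover have "B \<subseteq> X" using assms(1,2) by (rule order_trans)
  ultimately have "?f \<in> X \<rightarrow>\<^sub>E X" "\<forall>x\<in>X. ?f (?f x) = ?f x" by auto
  moreover show "?f ` X = B"
  proof
    show "?f ` X \<subseteq> B" using gB by auto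
    show "B \<subseteq> ?f ` X" using assms(1,2) by (force intro: rev_image_eqI)
  qed
  ultimately show "?f \<in> Idem X (T_im X A)" using assms(1) by (simp add: Idem_T_im_iff)
qed

lemma Idem_T_im_with_image_bij:
  assumes "B \<subseteq> A" "A \<subseteq> X"
  shows "bij_betw (\<lambda>f. restrict f (X - B)) {f \<in> Idem X (T_im X A). f ` X = B} (X - B \<rightarrow>\<^sub>E B)"
proof (rule bij_betw_byWitness[where f' = "\<lambda>g. \<lambda>x\<in>X. if x \<in> B then x else g x"])
  show "\<forall>f\<in>{f \<in> Idem X (T_im X A). f ` X = B}. (\<lambda>x\<in>X. if x \<in> B then x else restrict f (X - B) x) = f"
  proof
    fix f assume "f \<in> {f \<in> Idem X (T_im X A). f ` X = B}"
    then have f: "f \<in> X \<rightarrow>\<^sub>E X" "f ` X = B" "\<forall>x\<in>X. f (f x) = f x" by (auto simp: Idem_T_im_iff)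
    then have "\<forall>b\<in>B. f b = b" by auto
    then show "(\<lambda>x\<in>X. if x \<in> B then x else restrict f (X - B) x) = f"
      using f(1) assms by (intro PiE_ext) auto
  qed
  show "(\<lambda>g. \<lambda>x\<in>X. if x \<in> B then x else g x) ` (X - B \<rightarrow>\<^sub>E B) \<subseteq> {f \<in> Idem X (T_im X A). f ` X = B}"
    using identity_extension_in_Idem_T_im[OF assms] by blast
  show "\<forall>g\<in>X - B \<rightarrow>\<^sub>E B. restrict (\<lambda>x\<in>X. if x \<in> B then x else g x) (X - B) = g"
  proof
    fix g assume "g \<in> X - B \<rightarrow>\<^sub>E B"
    moreover have "restrict (\<lambda>x\<in>X. if x \<in> B then x else g x) (X - B) = restrict g (X - B)"
      by (rule restrict_ext) simp
    ultimately show "restrict (\<lambda>x\<in>X. if x \<in> B then x else g x) (X - B) = g"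
      by (simp add: PiE_restrict)
  qed
  show "(\<lambda>f. restrict f (X - B)) ` {f \<in> Idem X (T_im X A). f ` X = B} \<subseteq> X - B \<rightarrow>\<^sub>E B"
  proof (rule image_subsetI)
    fix f assume "f \<in> {f \<in> Idem X (T_im X A). f ` X = B}"
    then have "\<And>x. x \<in> X \<Longrightarrow> f x \<in> B" by blast
    then show "restrict f (X - B) \<in> X - B \<rightarrow>\<^sub>E B" by simp
  qed
qed

lemma card_Idem_T_im:
  assumes "A \<subseteq> X" "finite X" "X \<noteq> {}"
  shows "card (Idem X (T_im X A)) = (\<Sum>\<mu> = 1..card A. \<mu> ^ (card X - \<mu>) * (card A choose \<mu>))"
proof -
  have "finite A" using assms(1,2) by (rule finite_subset)
  have fin: "finite (Idem X (T_im X A))"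
    by (rule finite_subset[of _ "X \<rightarrow>\<^sub>E X"]) (auto simp: Idem_T_im_iff assms(2) finite_PiE)
  have image: "\<And>f. f \<in> Idem X (T_im X A) \<Longrightarrow> f ` X \<subseteq> A" by (simp add: Idem_T_im_iff)
  have fibre: "card {f \<in> Idem X (T_im X A). f ` X = B} = card B ^ (card X - card B) * 1"
    if "B \<subseteq> A" for B
  proof -
    have "card {f \<in> Idem X (T_im X A). f ` X = B} = card B ^ card (X - B)"
      using bij_betw_same_card[OF Idem_T_im_with_image_bij[OF that assms(1)]] assms(2)
      by (simp add: card_funcsetE)
    also have "card (X - B) = card X - card B"
      using that assms(1,2) by (meson card_Diff_subset finite_subset order_trans)
    finally show ?thesis by simp
  qed
  have "card (Idem X (T_im X A))
      = (\<Sum>k = 0..card A. k ^ (card X - k) * (\<Sum>B | B \<subseteq> A \<and> card B = k. 1))"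
    by (rule card_eq_sum_fibres_over_Pow[where c = "\<lambda>k. k ^ (card X - k)" and w = "\<lambda>_. 1",
          OF fin \<open>finite A\<close> image fibre])
  also have "\<dots> = (\<Sum>k = 0..card A. k ^ (card X - k) * (card A choose k))"
    using n_subsets[OF \<open>finite A\<close>] by simp
  also have "\<dots> = (\<Sum>k = 1..card A. k ^ (card X - k) * (card A choose k))"
    using assms(2,3) by (simp add: sum.atLeast_Suc_atMost card_gt_0_iff)
  finally show ?thesis .
qed

lemma Idem_T_im_eqpoll_Pow:
  assumes "infinite X" "A \<subseteq> X" "a \<in> A" "b \<in> A" "a \<noteq> b"
  shows "Idem X (T_im X A) \<approx> Pow X"
proof (rule lepoll_antisym)
  have "Idem X (T_im X A) \<subseteq> X \<rightarrow>\<^sub>E X" by (auto simp: Idem_T_im_iff)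
  then show "Idem X (T_im X A) \<lesssim> Pow X"
    using funcset_lepoll_Pow[OF assms(1)] subset_imp_lepoll lepoll_trans by blast
  have "Pow X \<lesssim> {f \<in> X \<rightarrow>\<^sub>E {a, b}. f a = a \<and> f b = b}"
    using assms by (intro Pow_lepoll_two_valued_retractions) auto
  moreover have "{f \<in> X \<rightarrow>\<^sub>E {a, b}. f a = a \<and> f b = b} \<subseteq> Idem X (T_im X A)"
  proof
    fix f assume f: "f \<in> {f \<in> X \<rightarrow>\<^sub>E {a, b}. f a = a \<and> f b = b}"
    have "f ` X \<subseteq> A" using f assms(3,4) by auto
    moreover have "f \<in> X \<rightarrow>\<^sub>E X" using f assms(2-4) by (auto simp: PiE_iff)
    moreover have "\<forall>x\<in>X. f (f x) = f x" using f by auto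
    ultimately show "f \<in> Idem X (T_im X A)" by (simp add: Idem_T_im_iff)
  qed
  ultimately show "Pow X \<lesssim> Idem X (T_im X A)" by (rule lepoll_trans[OF _ subset_imp_lepoll])
qed

lemma equiv_class_of_member:
  assumes "equiv X \<alpha>" "i \<in> X // \<alpha>" "x \<in> i"
  shows "\<alpha> `` {x} = i"
proof -
  obtain y where "y \<in> X" "i = \<alpha> `` {y}" using assms(2) by (rule quotientE)
  then show ?thesis using assms(1,3) equiv_class_eq by fastforce
qed

lemma some_in_class:
  assumes "equiv X \<alpha>" "i \<in> X // \<alpha>"
  shows "(SOME x. x \<in> i) \<in> i"
  using in_quotient_imp_non_empty[OF assms] by (simp add: some_in_eq)

lemma Idem_T_ker_iff:
  assumes "equiv X \<alpha>"
  shows "f \<in> Idem X (T_ker X \<alpha>) \<longleftrightarrow>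
    f \<in> X \<rightarrow>\<^sub>E X \<and> (\<forall>(x, y) \<in> \<alpha>. f x = f y) \<and> (\<forall>x\<in>X. f (f x) = f x)"
  using equiv_type[OF assms] by (auto simp: Idem_def T_ker_def)

text \<open>An idempotent \<open>f\<close> with \<open>\<alpha> \<subseteq> ker f\<close> is determined by its value \<open>g i\<close> on each
  \<open>\<alpha>\<close>-class \<open>i\<close>; idempotency says that \<open>f\<close> fixes every value, i.e. that \<open>g\<close> takes the same
  value on the class of \<open>g i\<close>.\<close>
definition idem_class_values :: "'a set \<Rightarrow> ('a \<times> 'a) set \<Rightarrow> ('a set \<Rightarrow> 'a) set" where
  "idem_class_values X \<alpha> = {g \<in> X // \<alpha> \<rightarrow>\<^sub>E X. \<forall>i \<in> X // \<alpha>. g (\<alpha> `` {g i}) = g i}"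

lemma idem_class_values_hit_class:
  assumes "equiv X \<alpha>" "g \<in> idem_class_values X \<alpha>" "i \<in> X // \<alpha>"
  shows "\<alpha> `` {g i} \<in> X // \<alpha>" and "g i \<in> \<alpha> `` {g i}"
proof -
  have "g i \<in> X" using assms(2,3) by (auto simp: idem_class_values_def)
  then show "\<alpha> `` {g i} \<in> X // \<alpha>" "g i \<in> \<alpha> `` {g i}"
    by (rule quotientI, rule equiv_class_self[OF assms(1)])
qed

lemma class_values_of_Idem_T_ker:
  assumes eq: "equiv X \<alpha>" and "f \<in> Idem X (T_ker X \<alpha>)"
  shows "(\<lambda>i\<in>X // \<alpha>. f (SOME x. x \<in> i)) \<in> idem_class_values X \<alpha>"
proof -
  have f: "f \<in> X \<rightarrow>\<^sub>E X" "\<And>x y. (x, y) \<in> \<alpha> \<Longrightarrow> f x = f y" "\<And>x. x \<in> X \<Longrightarrow> f (f x) = f x"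
    using assms(2) by (auto simp: Idem_T_ker_iff[OF eq])
  let ?g = "\<lambda>i\<in>X // \<alpha>. f (SOME x. x \<in> i)"
  have rep_X: "(SOME x. x \<in> i) \<in> X" if "i \<in> X // \<alpha>" for i
    using some_in_class[OF eq that] in_quotient_imp_subset[OF eq that] by blast
  have g_X: "?g i \<in> X" if "i \<in> X // \<alpha>" for i
    using f(1) rep_X[OF that] that by auto
  have "?g (\<alpha> `` {?g i}) = ?g i" if i: "i \<in> X // \<alpha>" for i
  proof -
    have cls: "\<alpha> `` {?g i} \<in> X // \<alpha>" using g_X[OF i] by (rule quotientI)
    then have "(?g i, SOME x. x \<in> \<alpha> `` {?g i}) \<in> \<alpha>" using some_in_class[OF eq cls] by simp
    then have "f (SOME x. x \<in> \<alpha> `` {?g i}) = f (?g i)" using f(2) by metis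
    also have "\<dots> = ?g i" using f(3) rep_X[OF i] i by simp
    finally show ?thesis using cls by simp
  qed
  then show ?thesis using g_X by (simp add: idem_class_values_def)
qed

lemma Idem_T_ker_of_class_values:
  assumes eq: "equiv X \<alpha>" and "g \<in> idem_class_values X \<alpha>"
  shows "(\<lambda>x\<in>X. g (\<alpha> `` {x})) \<in> Idem X (T_ker X \<alpha>)"
proof -
  have g: "\<And>x. x \<in> X \<Longrightarrow> g (\<alpha> `` {x}) \<in> X"
    "\<And>x. x \<in> X \<Longrightarrow> g (\<alpha> `` {g (\<alpha> `` {x})}) = g (\<alpha> `` {x})"
    using assms(2) quotientI[of _ X \<alpha>] by (auto simp: idem_class_values_def)
  have "\<alpha> `` {x} = \<alpha> `` {y} \<and> x \<in> X \<and> y \<in> X" if "(x, y) \<in> \<alpha>" for x y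
    using that equiv_class_eq_iff[OF eq] by blast
  then show ?thesis using g by (auto simp: Idem_T_ker_iff[OF eq])
qed

lemma Idem_T_ker_bij_idem_class_values:
  assumes eq: "equiv X \<alpha>"
  shows "bij_betw (\<lambda>f. \<lambda>i\<in>X // \<alpha>. f (SOME x. x \<in> i)) (Idem X (T_ker X \<alpha>)) (idem_class_values X \<alpha>)"
proof (rule bij_betw_byWitness[where f' = "\<lambda>g. \<lambda>x\<in>X. g (\<alpha> `` {x})"])
  have rep_X: "(SOME x. x \<in> i) \<in> X" if "i \<in> X // \<alpha>" for i
    using some_in_class[OF eq that] in_quotient_imp_subset[OF eq that] by blast
  show "\<forall>f\<in>Idem X (T_ker X \<alpha>). (\<lambda>x\<in>X. (\<lambda>i\<in>X // \<alpha>. f (SOME x. x \<in> i)) (\<alpha> `` {x})) = f"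
  proof
    fix f assume "f \<in> Idem X (T_ker X \<alpha>)"
    then have f: "f \<in> X \<rightarrow>\<^sub>E X" "\<And>x y. (x, y) \<in> \<alpha> \<Longrightarrow> f x = f y"
      by (auto simp: Idem_T_ker_iff[OF eq])
    have "\<alpha> `` {x} \<in> X // \<alpha>" "f (SOME y. y \<in> \<alpha> `` {x}) = f x" if "x \<in> X" for x
      using f(2) some_in_class[OF eq quotientI[OF that]] quotientI[OF that] by auto
    then show "(\<lambda>x\<in>X. (\<lambda>i\<in>X // \<alpha>. f (SOME x. x \<in> i)) (\<alpha> `` {x})) = f"
      using f(1) by (intro PiE_ext) auto
  qed
  show "\<forall>g\<in>idem_class_values X \<alpha>. (\<lambda>i\<in>X // \<alpha>. (\<lambda>x\<in>X. g (\<alpha> `` {x})) (SOME x. x \<in> i)) = g"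
  proof
    fix g assume "g \<in> idem_class_values X \<alpha>"
    then have g: "g \<in> X // \<alpha> \<rightarrow>\<^sub>E X" by (simp add: idem_class_values_def)
    have "(\<lambda>x\<in>X. g (\<alpha> `` {x})) (SOME x. x \<in> i) = g i" if "i \<in> X // \<alpha>" for i
      using rep_X[OF that] equiv_class_of_member[OF eq that some_in_class[OF eq that]] by simp
    then show "(\<lambda>i\<in>X // \<alpha>. (\<lambda>x\<in>X. g (\<alpha> `` {x})) (SOME x. x \<in> i)) = g"
      using g by (intro PiE_ext) (auto simp: rep_X)
  qed
qed (use class_values_of_Idem_T_ker[OF eq] Idem_T_ker_of_class_values[OF eq] in blast)+

lemma choice_extension_in_idem_class_values:
  assumes eq: "equiv X \<alpha>" and J: "J \<subseteq> X // \<alpha>"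
    and c: "c \<in> (\<Pi>\<^sub>E j\<in>J. j)" and k: "k \<in> X // \<alpha> - J \<rightarrow>\<^sub>E J"
  defines "g \<equiv> \<lambda>i\<in>X // \<alpha>. if i \<in> J then c i else c (k i)"
  shows "g \<in> idem_class_values X \<alpha>" and "(\<lambda>i. \<alpha> `` {g i}) ` (X // \<alpha>) = J"
proof -
  have class_c: "\<alpha> `` {c j} = j" if "j \<in> J" for j
    using c J that by (intro equiv_class_of_member[OF eq]) auto
  have choice_value: "\<exists>j\<in>J. g i = c j" if "i \<in> X // \<alpha>" for i
    using that k unfolding g_def by (cases "i \<in> J") auto
  have g_class: "\<alpha> `` {g i} \<in> J" and g_X: "g i \<in> X" if i: "i \<in> X // \<alpha>" for i
  proof -
    obtain j where "j \<in> J" "g i = c j" using choice_value[OF i] by blast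
    moreover have "c j \<in> j" using c \<open>j \<in> J\<close> by auto
    moreover have "j \<subseteq> X" using \<open>j \<in> J\<close> J in_quotient_imp_subset[OF eq] by blast
    ultimately show "\<alpha> `` {g i} \<in> J" "g i \<in> X" using class_c by auto
  qed
  have "g \<in> X // \<alpha> \<rightarrow>\<^sub>E X" using g_X unfolding g_def by simp
  moreover have "g (\<alpha> `` {g i}) = g i" if i: "i \<in> X // \<alpha>" for i
  proof -
    obtain j where j: "j \<in> J" "g i = c j" using choice_value[OF i] by blast
    then have "g (\<alpha> `` {g i}) = g j" by (simp only: j(2) class_c)
    also have "\<dots> = c j" using j(1) J unfolding g_def by auto
    also have "\<dots> = g i" using j(2) by (rule sym)
    finally show ?thesis .
  qed
  moreover have "(\<lambda>i. \<alpha> `` {g i}) ` (X // \<alpha>) = J"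
  proof
    show "(\<lambda>i. \<alpha> `` {g i}) ` (X // \<alpha>) \<subseteq> J" using g_class by blast
    show "J \<subseteq> (\<lambda>i. \<alpha> `` {g i}) ` (X // \<alpha>)"
    proof
      fix j assume "j \<in> J"
      moreover have "g j = c j" using \<open>j \<in> J\<close> J unfolding g_def by auto
      ultimately have "j = \<alpha> `` {g j}" "j \<in> X // \<alpha>" using class_c J by auto
      then show "j \<in> (\<lambda>i. \<alpha> `` {g i}) ` (X // \<alpha>)"
        by (intro rev_image_eqI[of j "X // \<alpha>" j "\<lambda>i. \<alpha> `` {g i}"])
    qed
  qed
  ultimately show "g \<in> idem_class_values X \<alpha>" "(\<lambda>i. \<alpha> `` {g i}) ` (X // \<alpha>) = J"
    unfolding idem_class_values_def by blast+
qed

lemma idem_class_values_with_image_bij: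
  assumes eq: "equiv X \<alpha>" and J: "J \<subseteq> X // \<alpha>"
  shows "bij_betw (\<lambda>g. (restrict g J, \<lambda>i\<in>X // \<alpha> - J. \<alpha> `` {g i}))
           {g \<in> idem_class_values X \<alpha>. (\<lambda>i. \<alpha> `` {g i}) ` (X // \<alpha>) = J}
           ((\<Pi>\<^sub>E j\<in>J. j) \<times> (X // \<alpha> - J \<rightarrow>\<^sub>E J))"
proof (rule bij_betw_byWitness[where f' = "\<lambda>(c, k). \<lambda>i\<in>X // \<alpha>. if i \<in> J then c i else c (k i)"])
  let ?fibre = "{g \<in> idem_class_values X \<alpha>. (\<lambda>i. \<alpha> `` {g i}) ` (X // \<alpha>) = J}"
  have fibre_class: "\<alpha> `` {g i} \<in> J" if "g \<in> ?fibre" "i \<in> X // \<alpha>" for g i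
    using that by blast
  have fibre_fix: "g (\<alpha> `` {g i}) = g i" if "g \<in> ?fibre" "i \<in> X // \<alpha>" for g i
    using that by (simp add: idem_class_values_def)
  have fibre_choice: "g j \<in> j" if g: "g \<in> ?fibre" and j: "j \<in> J" for g j
  proof -
    obtain i where i: "i \<in> X // \<alpha>" "j = \<alpha> `` {g i}" using g j by blast
    then show ?thesis using fibre_fix[OF g i(1)] idem_class_values_hit_class(2)[OF eq] g by simp
  qed
  show "\<forall>g\<in>?fibre. (\<lambda>(c, k). \<lambda>i\<in>X // \<alpha>. if i \<in> J then c i else c (k i))
          (restrict g J, \<lambda>i\<in>X // \<alpha> - J. \<alpha> `` {g i}) = g"
  proof
    fix g assume g: "g \<in> ?fibre"
    then have "g \<in> X // \<alpha> \<rightarrow>\<^sub>E X" by (simp add: idem_class_values_def)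
    then show "(\<lambda>(c, k). \<lambda>i\<in>X // \<alpha>. if i \<in> J then c i else c (k i))
          (restrict g J, \<lambda>i\<in>X // \<alpha> - J. \<alpha> `` {g i}) = g"
      using fibre_class[OF g] fibre_fix[OF g] J by (intro PiE_ext) (auto intro: PiE_mem)
  qed
  show "\<forall>p\<in>(\<Pi>\<^sub>E j\<in>J. j) \<times> (X // \<alpha> - J \<rightarrow>\<^sub>E J).
          (\<lambda>g. (restrict g J, \<lambda>i\<in>X // \<alpha> - J. \<alpha> `` {g i}))
            ((\<lambda>(c, k). \<lambda>i\<in>X // \<alpha>. if i \<in> J then c i else c (k i)) p) = p"
  proof (clarify)
    fix c k assume c: "c \<in> (\<Pi>\<^sub>E j\<in>J. j)" and k: "k \<in> X // \<alpha> - J \<rightarrow>\<^sub>E J"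
    have "restrict (\<lambda>i\<in>X // \<alpha>. if i \<in> J then c i else c (k i)) J = c"
      using c J by (intro PiE_ext) auto
    moreover have "\<alpha> `` {c (k i)} = k i" if "i \<in> X // \<alpha> - J" for i
      using k c J that by (intro equiv_class_of_member[OF eq]) auto
    then have "(\<lambda>i\<in>X // \<alpha> - J. \<alpha> `` {(\<lambda>i\<in>X // \<alpha>. if i \<in> J then c i else c (k i)) i}) = k"
      using k by (intro PiE_ext) auto
    ultimately show "restrict (\<lambda>i\<in>X // \<alpha>. if i \<in> J then c i else c (k i)) J = c \<and>
        (\<lambda>i\<in>X // \<alpha> - J. \<alpha> `` {(\<lambda>i\<in>X // \<alpha>. if i \<in> J then c i else c (k i)) i}) = k" ..
  qed
  show "(\<lambda>g. (restrict g J, \<lambda>i\<in>X // \<alpha> - J. \<alpha> `` {g i})) ` ?fibre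
        \<subseteq> (\<Pi>\<^sub>E j\<in>J. j) \<times> (X // \<alpha> - J \<rightarrow>\<^sub>E J)"
  proof (rule image_subsetI)
    fix g assume g: "g \<in> ?fibre"
    show "(restrict g J, \<lambda>i\<in>X // \<alpha> - J. \<alpha> `` {g i}) \<in> (\<Pi>\<^sub>E j\<in>J. j) \<times> (X // \<alpha> - J \<rightarrow>\<^sub>E J)"
      using fibre_choice[OF g] fibre_class[OF g] by auto
  qed
  show "(\<lambda>(c, k). \<lambda>i\<in>X // \<alpha>. if i \<in> J then c i else c (k i)) ` ((\<Pi>\<^sub>E j\<in>J. j) \<times> (X // \<alpha> - J \<rightarrow>\<^sub>E J))
        \<subseteq> ?fibre"
  proof (rule image_subsetI)
    fix p assume "p \<in> (\<Pi>\<^sub>E j\<in>J. j) \<times> (X // \<alpha> - J \<rightarrow>\<^sub>E J)"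
    then obtain c k where "p = (c, k)" "c \<in> (\<Pi>\<^sub>E j\<in>J. j)" "k \<in> X // \<alpha> - J \<rightarrow>\<^sub>E J" by blast
    with choice_extension_in_idem_class_values[OF eq J \<open>c \<in> _\<close> \<open>k \<in> _\<close>]
    show "(\<lambda>(c, k). \<lambda>i\<in>X // \<alpha>. if i \<in> J then c i else c (k i)) p \<in> ?fibre" by simp
  qed
qed

lemma card_Idem_T_ker:
  assumes eq: "equiv X \<alpha>" and "finite X" "X \<noteq> {}"
  shows "card (Idem X (T_ker X \<alpha>)) = (\<Sum>\<mu> = 1..card (X // \<alpha>).
           \<mu> ^ (card (X // \<alpha>) - \<mu>) * (\<Sum>J \<in> {J. J \<subseteq> X // \<alpha> \<and> card J = \<mu>}. \<Prod>j \<in> J. card j))"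
proof -
  let ?n = "card (X // \<alpha>)"
  have fin_I: "finite (X // \<alpha>)" using finite_quotient[OF assms(2) equiv_type[OF eq]] .
  have fin: "finite (idem_class_values X \<alpha>)"
    by (rule finite_subset[of _ "X // \<alpha> \<rightarrow>\<^sub>E X"])
       (auto simp: idem_class_values_def fin_I assms(2) finite_PiE)
  have image: "(\<lambda>i. \<alpha> `` {g i}) ` (X // \<alpha>) \<subseteq> X // \<alpha>" if "g \<in> idem_class_values X \<alpha>" for g
    using that by (auto simp: idem_class_values_def intro: quotientI)
  have fibre: "card {g \<in> idem_class_values X \<alpha>. (\<lambda>i. \<alpha> `` {g i}) ` (X // \<alpha>) = J}
      = card J ^ (?n - card J) * (\<Prod>j\<in>J. card j)" if J: "J \<subseteq> X // \<alpha>" for J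
  proof -
    have "finite J" using fin_I J by (rule rev_finite_subset)
    then have "card ((\<Pi>\<^sub>E j\<in>J. j) \<times> (X // \<alpha> - J \<rightarrow>\<^sub>E J)) = (\<Prod>j\<in>J. card j) * card J ^ (?n - card J)"
      using fin_I J by (simp add: card_cartesian_product card_PiE card_funcsetE card_Diff_subset)
    then show ?thesis
      using bij_betw_same_card[OF idem_class_values_with_image_bij[OF eq J]] by simp
  qed
  have "card (Idem X (T_ker X \<alpha>)) = card (idem_class_values X \<alpha>)"
    by (rule bij_betw_same_card[OF Idem_T_ker_bij_idem_class_values[OF eq]])
  also have "\<dots> = (\<Sum>k = 0..?n. k ^ (?n - k) * (\<Sum>J | J \<subseteq> X // \<alpha> \<and> card J = k. \<Prod>j\<in>J. card j))"
    by (rule card_eq_sum_fibres_over_Pow[where c = "\<lambda>k. k ^ (?n - k)" and w = "\<lambda>J. \<Prod>j\<in>J. card j",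
          OF fin fin_I image fibre])
  also have "\<dots> = (\<Sum>k = 1..?n. k ^ (?n - k) * (\<Sum>J | J \<subseteq> X // \<alpha> \<and> card J = k. \<Prod>j\<in>J. card j))"
    using fin_I assms(3) by (simp add: sum.atLeast_Suc_atMost card_gt_0_iff)
  finally show ?thesis .
qed

lemma infinite_PiE:
  assumes "\<And>i. i \<in> I \<Longrightarrow> F i \<noteq> {}" "j \<in> I" "infinite (F j)"
  shows "infinite (\<Pi>\<^sub>E i\<in>I. F i)"
proof -
  obtain c where c: "c \<in> (\<Pi>\<^sub>E i\<in>I. F i)" using assms(1) by (metis PiE_eq_empty_iff ex_in_conv)
  have "inj_on (\<lambda>x. c(j := x)) (F j)" by (rule inj_onI) (metis fun_upd_same)
  moreover have "(\<lambda>x. c(j := x)) ` F j \<subseteq> (\<Pi>\<^sub>E i\<in>I. F i)"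
    using PiE_fun_upd[OF _ c] insert_absorb[OF assms(2)] by auto
  ultimately show ?thesis using assms(3) finite_imageD finite_subset by metis
qed

lemma choices_subset_idem_class_values:
  assumes eq: "equiv X \<alpha>"
  shows "(\<Pi>\<^sub>E i\<in>X // \<alpha>. i) \<subseteq> idem_class_values X \<alpha>"
proof
  fix c assume c: "c \<in> (\<Pi>\<^sub>E i\<in>X // \<alpha>. i)"
  then have "c \<in> X // \<alpha> \<rightarrow>\<^sub>E X" using in_quotient_imp_subset[OF eq] by auto
  moreover have "c (\<alpha> `` {c i}) = c i" if "i \<in> X // \<alpha>" for i
  proof -
    have "c i \<in> i" using c that by auto
    then show ?thesis using equiv_class_of_member[OF eq that] by simp
  qed
  ultimately show "c \<in> idem_class_values X \<alpha>" by (simp add: idem_class_values_def)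
qed

lemma idem_class_values_lepoll_funcset_times_choices:
  assumes eq: "equiv X \<alpha>" and c0: "c0 \<in> (\<Pi>\<^sub>E i\<in>X // \<alpha>. i)"
  shows "idem_class_values X \<alpha> \<lesssim> (X // \<alpha> \<rightarrow>\<^sub>E X // \<alpha>) \<times> (\<Pi>\<^sub>E i\<in>X // \<alpha>. i)"
proof -
  let ?cls = "\<lambda>g i. \<alpha> `` {g i}"
  \<comment> \<open>Since \<open>g i = g (\<alpha> `` {g i})\<close>, \<open>g\<close> is recovered from its map of classes and its
    values on the classes it hits; on the other classes the second component is padded by \<open>c0\<close>.\<close>
  let ?F = "\<lambda>g. (\<lambda>i\<in>X // \<alpha>. ?cls g i, \<lambda>j\<in>X // \<alpha>. if j \<in> ?cls g ` (X // \<alpha>) then g j else c0 j)"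
  note cls = idem_class_values_hit_class(1)[OF eq] and mem = idem_class_values_hit_class(2)[OF eq]
  have fixed: "g (?cls g i) = g i" if "g \<in> idem_class_values X \<alpha>" "i \<in> X // \<alpha>" for g i
    using that by (simp add: idem_class_values_def)
  have "inj_on ?F (idem_class_values X \<alpha>)"
  proof (rule inj_onI)
    fix g g' assume g: "g \<in> idem_class_values X \<alpha>" and g': "g' \<in> idem_class_values X \<alpha>"
      and eq_F: "?F g = ?F g'"
    show "g = g'"
    proof (rule PiE_ext)
      show "g \<in> X // \<alpha> \<rightarrow>\<^sub>E X" "g' \<in> X // \<alpha> \<rightarrow>\<^sub>E X"
        using g g' by (simp_all add: idem_class_values_def)
      fix i assume i: "i \<in> X // \<alpha>"
      have same_class: "?cls g i = ?cls g' i"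
        using fun_cong[OF arg_cong[OF eq_F, of fst], of i] i by simp
      have in_images: "?cls g i \<in> ?cls g ` (X // \<alpha>)" "?cls g i \<in> ?cls g' ` (X // \<alpha>)"
        using i same_class by auto
      have "g i = g (?cls g i)" using fixed[OF g i] by simp
      also have "\<dots> = g' (?cls g i)"
        using fun_cong[OF arg_cong[OF eq_F, of snd], of "?cls g i"] cls[OF g i] in_images by simp
      also have "\<dots> = g' i" unfolding same_class by (rule fixed[OF g' i])
      finally show "g i = g' i" .
    qed
  qed
  moreover have "?F ` idem_class_values X \<alpha> \<subseteq> (X // \<alpha> \<rightarrow>\<^sub>E X // \<alpha>) \<times> (\<Pi>\<^sub>E i\<in>X // \<alpha>. i)"
  proof (rule image_subsetI)
    fix g assume g: "g \<in> idem_class_values X \<alpha>"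
    have "(if j \<in> ?cls g ` (X // \<alpha>) then g j else c0 j) \<in> j" if j: "j \<in> X // \<alpha>" for j
    proof (cases "j \<in> ?cls g ` (X // \<alpha>)")
      case True
      then obtain i where "i \<in> X // \<alpha>" "j = ?cls g i" by blast
      then show ?thesis using mem[OF g] fixed[OF g] by simp
    next
      case False
      then show ?thesis using c0 j by auto
    qed
    moreover have "(\<lambda>i\<in>X // \<alpha>. ?cls g i) \<in> X // \<alpha> \<rightarrow>\<^sub>E X // \<alpha>" using cls[OF g] by simp
    ultimately show "?F g \<in> (X // \<alpha> \<rightarrow>\<^sub>E X // \<alpha>) \<times> (\<Pi>\<^sub>E i\<in>X // \<alpha>. i)" by simp
  qed
  ultimately show ?thesis unfolding lepoll_def by blast
qed

lemma Pow_lepoll_idem_class_values: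
  assumes eq: "equiv X \<alpha>" and c0: "c0 \<in> (\<Pi>\<^sub>E i\<in>X // \<alpha>. i)" and inf: "infinite (X // \<alpha>)"
  shows "Pow (X // \<alpha>) \<lesssim> idem_class_values X \<alpha>"
proof -
  obtain i0 where i0: "i0 \<in> X // \<alpha>" using infinite_imp_nonempty[OF inf] by (metis ex_in_conv)
  have "infinite (X // \<alpha> - {i0})" using inf by simp
  then obtain i1 where i1: "i1 \<in> X // \<alpha> - {i0}" using infinite_imp_nonempty by (metis ex_in_conv)
  let ?R = "{h \<in> X // \<alpha> \<rightarrow>\<^sub>E {i0, i1}. h i0 = i0 \<and> h i1 = i1}"
  let ?C = "\<lambda>h. \<lambda>i\<in>X // \<alpha>. c0 (h i)"
  have class_c0: "\<alpha> `` {c0 i} = i" if "i \<in> X // \<alpha>" for i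
    using c0 that by (intro equiv_class_of_member[OF eq]) auto
  have c0_X: "c0 i \<in> X" if "i \<in> X // \<alpha>" for i
    using c0 that in_quotient_imp_subset[OF eq] by blast
  have "Pow (X // \<alpha>) \<lesssim> ?R"
    using inf i0 i1 by (intro Pow_lepoll_two_valued_retractions) auto
  moreover have "inj_on ?C ?R"
  proof (rule inj_onI)
    fix h h' assume h: "h \<in> ?R" and h': "h' \<in> ?R" and eq_C: "?C h = ?C h'"
    have "h i = h' i" if i: "i \<in> X // \<alpha>" for i
    proof -
      have "h i \<in> X // \<alpha>" "h' i \<in> X // \<alpha>" using h h' i i0 i1 by auto
      moreover have "c0 (h i) = c0 (h' i)" using fun_cong[OF eq_C, of i] i by simp
      ultimately show ?thesis using class_c0 by metis
    qed
    moreover have "h \<in> X // \<alpha> \<rightarrow>\<^sub>E {i0, i1}" "h' \<in> X // \<alpha> \<rightarrow>\<^sub>E {i0, i1}" using h h' by auto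
    ultimately show "h = h'" using PiE_ext by metis
  qed
  moreover have "?C ` ?R \<subseteq> idem_class_values X \<alpha>"
  proof (rule image_subsetI)
    fix h assume h: "h \<in> ?R"
    then have h_I: "h i \<in> X // \<alpha>" and h_idem: "h (h i) = h i" if "i \<in> X // \<alpha>" for i
      using that i0 i1 by auto
    have "?C h (\<alpha> `` {?C h i}) = ?C h i" if i: "i \<in> X // \<alpha>" for i
    proof -
      have "\<alpha> `` {?C h i} = h i" using class_c0[OF h_I[OF i]] i by simp
      then show ?thesis using i h_I[OF i] h_idem[OF i] by simp
    qed
    moreover have "?C h \<in> X // \<alpha> \<rightarrow>\<^sub>E X" using h_I c0_X by simp
    ultimately show "?C h \<in> idem_class_values X \<alpha>" unfolding idem_class_values_def by blast
  qed
  ultimately have "Pow (X // \<alpha>) \<lesssim> ?R" "?R \<lesssim> idem_class_values X \<alpha>"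
    unfolding lepoll_def by blast+
  then show ?thesis by (rule lepoll_trans)
qed

lemma Idem_T_ker_eqpoll:
  assumes eq: "equiv X \<alpha>" and inf: "infinite X"
  shows "Idem X (T_ker X \<alpha>) \<approx> Pow (X // \<alpha>) \<times> (\<Pi>\<^sub>E i\<in>X // \<alpha>. i)"
proof -
  let ?I = "X // \<alpha>" and ?V = "idem_class_values X \<alpha>"
  let ?P = "\<Pi>\<^sub>E i\<in>X // \<alpha>. i"
  obtain c0 where c0: "c0 \<in> ?P"
    using in_quotient_imp_non_empty[OF eq] by (metis PiE_eq_empty_iff ex_in_conv)
  have P_V: "?P \<lesssim> ?V" by (rule subset_imp_lepoll[OF choices_subset_idem_class_values[OF eq]])
  have V_upper: "?V \<lesssim> (?I \<rightarrow>\<^sub>E ?I) \<times> ?P"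
    by (rule idem_class_values_lepoll_funcset_times_choices[OF eq c0])
  have "?V \<approx> Pow ?I \<times> ?P"
  proof (cases "finite ?I")
    case True
    obtain j where "j \<in> ?I" "infinite j"
      using inf Union_quotient[OF eq] True by (metis finite_Union)
    then have "infinite ?P" using in_quotient_imp_non_empty[OF eq] by (intro infinite_PiE)
    moreover have "?I \<rightarrow>\<^sub>E ?I \<noteq> {}" "Pow ?I \<noteq> {}" by (auto simp: PiE_eq_empty_iff)
    ultimately have "(?I \<rightarrow>\<^sub>E ?I) \<times> ?P \<approx> ?P" "Pow ?I \<times> ?P \<approx> ?P"
      using True by (auto intro!: times_infinite_eqpoll finite_lepoll_infinite simp: finite_PiE)
    then have "?V \<approx> ?P" using V_upper P_V by (metis lepoll_antisym lepoll_trans2)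
    then show ?thesis using \<open>Pow ?I \<times> ?P \<approx> ?P\<close> by (metis eqpoll_sym eqpoll_trans)
  next
    case False
    have Pow_V: "Pow ?I \<lesssim> ?V" by (rule Pow_lepoll_idem_class_values[OF eq c0 False])
    then have "infinite ?V" using False by (metis finite_Pow_iff infinite_le_lepoll lepoll_trans)
    then have "Pow ?I \<times> ?P \<lesssim> ?V" using Pow_V P_V by (rule times_lepoll_infinite)
    moreover have "?V \<lesssim> Pow ?I \<times> ?P"
      using V_upper times_lepoll_mono[OF funcset_lepoll_Pow[OF False] lepoll_refl] by (rule lepoll_trans)
    ultimately show ?thesis by (simp add: lepoll_antisym)
  qed
  moreover have "Idem X (T_ker X \<alpha>) \<approx> ?V"
    using Idem_T_ker_bij_idem_class_values[OF eq] unfolding eqpoll_def by blast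
  ultimately show ?thesis using eqpoll_trans by blast
qed

theorem proposition5p30:
  fixes X A :: "'a set" and \<alpha> :: "('a \<times> 'a) set"
  assumes "X \<noteq> {}" and "A \<noteq> {}" and "A \<subseteq> X" and "equiv X \<alpha>"
  shows "(card A = 1 \<longrightarrow> card (Idem X (T_im X A)) = 1)
       \<and> (infinite X \<and> card A \<noteq> 1 \<longrightarrow> Idem X (T_im X A) \<approx> Pow X)
       \<and> (finite X \<and> card A \<noteq> 1 \<longrightarrow>
            card (Idem X (T_im X A)) = (\<Sum>\<mu> = 1..card A. \<mu> ^ (card X - \<mu>) * (card A choose \<mu>)))
       \<and> (infinite X \<longrightarrow> Idem X (T_ker X \<alpha>) \<approx> Pow (X // \<alpha>) \<times> (\<Pi>\<^sub>E i \<in> X // \<alpha>. i))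
       \<and> (finite X \<longrightarrow>
            card (Idem X (T_ker X \<alpha>)) = (\<Sum>\<mu> = 1..card (X // \<alpha>).
               \<mu> ^ (card (X // \<alpha>) - \<mu>) *
               (\<Sum>J \<in> {J. J \<subseteq> X // \<alpha> \<and> card J = \<mu>}. \<Prod>j \<in> J. card j)))"
proof (intro conjI impI)
  assume "card A = 1"
  then obtain a where "A = {a}" by (rule card_1_singletonE)
  then show "card (Idem X (T_im X A)) = 1" using assms(3) by (simp add: Idem_T_im_singleton)
next
  assume infinite: "infinite X \<and> card A \<noteq> 1"
  obtain a where a: "a \<in> A" using assms(2) by blast
  have "A \<noteq> {a}" using infinite by auto
  then obtain b where "b \<in> A" "a \<noteq> b" using a by blast
  then show "Idem X (T_im X A) \<approx> Pow X"
    using Idem_T_im_eqpoll_Pow[OF _ assms(3) a] infinite by blast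
next
  assume "finite X \<and> card A \<noteq> 1"
  then show "card (Idem X (T_im X A)) = (\<Sum>\<mu> = 1..card A. \<mu> ^ (card X - \<mu>) * (card A choose \<mu>))"
    using card_Idem_T_im[OF assms(3) _ assms(1)] by blast
next
  assume "infinite X"
  then show "Idem X (T_ker X \<alpha>) \<approx> Pow (X // \<alpha>) \<times> (\<Pi>\<^sub>E i \<in> X // \<alpha>. i)"
    by (rule Idem_T_ker_eqpoll[OF assms(4)])
next
  assume "finite X"
  then show "card (Idem X (T_ker X \<alpha>)) = (\<Sum>\<mu> = 1..card (X // \<alpha>).
               \<mu> ^ (card (X // \<alpha>) - \<mu>) *
               (\<Sum>J \<in> {J. J \<subseteq> X // \<alpha> \<and> card J = \<mu>}. \<Prod>j \<in> J. card j))"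
    by (rule card_Idem_T_ker[OF assms(4) _ assms(1)])
qed

end
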